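(* Let $\alpha,\beta>0$ and $0<\delta\le1$, and let the inverse demand function be $p(q)=\max\{\alpha-\beta q^{\delta},0\}$ for $q\ge0$. Suppose the cost functions satisfy Assumptions 1, 3 and 4. Then every Cournot equilibrium $\mathbf{x}$ satisfies $\gamma(\mathbf{x})\ge f\big((\delta+1)^{(1-\delta)/\delta}\big)$.
   Context: Cournot model: $N$ suppliers, inverse demand $p$, supplier $n$ has cost $C_n:[0,\infty)\to[0,\infty)$ and chooses $x_n\ge0$; $X=\sum_n x_n$; payoff of $n$ is $x_np(X)-C_n(x_n)$. A Cournot equilibrium is a profile $\mathbf{x}\ge0$ such that no supplier can increase its payoff by unilaterally changing its quantity to any $x\ge0$. $C_n'(0)$ is the right derivative at $0$. Assumption 1: each $C_n$ is convex, continuous, nondecreasing on $[0,\infty)$, continuously differentiable on $(0,\infty)$, with $C_n(0)=0$. Assumption 3: there exists $R>0$ such that $p(R)\le\min_n C_n'(0)$. Assumption 4: $p(0)>\min_n C_n'(0)$. Social welfare of $\mathbf{x}\ge0$: $W(\mathbf{x})=\int_0^X p(q)\,dq-\sum_{n=1}^N C_n(x_n)$; a social optimum $\mathbf{x}^S$ maximizes $W$. Efficiency: $\gamma(\mathbf{x})=W(\mathbf{x})/W(\mathbf{x}^S)$. For $\overline c\ge1$: $f(\overline c)=\dfrac{\phi^2+2}{\phi^2+2\phi+\overline c}$ with $\phi=\max\left\{\dfrac{2-\overline c+\sqrt{\overline c^{\,2}-4\overline c+12}}{2},1\right\}$. *)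

theory Defs
  imports "HOL-Analysis.Analysis"
begin

(* Suppliers are indexed by n \<in> {..<N}; a profile is x :: nat \<Rightarrow> real,
   only its values on {..<N} matter. Costs: C :: nat \<Rightarrow> real \<Rightarrow> real. *)

definition total :: "nat \<Rightarrow> (nat \<Rightarrow> real) \<Rightarrow> real" where
  "total N x = (\<Sum>n<N. x n)"

definition feasible :: "nat \<Rightarrow> (nat \<Rightarrow> real) \<Rightarrow> bool" where
  "feasible N x \<longleftrightarrow> (\<forall>n<N. 0 \<le> x n)"

definition payoff :: "(real \<Rightarrow> real) \<Rightarrow> (nat \<Rightarrow> real \<Rightarrow> real) \<Rightarrow> nat \<Rightarrow> (nat \<Rightarrow> real) \<Rightarrow> nat \<Rightarrow> real" where
  "payoff p C N x n = x n * p (total N x) - C n (x n)"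

definition cournot_equilibrium :: "(real \<Rightarrow> real) \<Rightarrow> (nat \<Rightarrow> real \<Rightarrow> real) \<Rightarrow> nat \<Rightarrow> (nat \<Rightarrow> real) \<Rightarrow> bool" where
  "cournot_equilibrium p C N x \<longleftrightarrow> feasible N x \<and>
     (\<forall>n<N. \<forall>y::real. 0 \<le> y \<longrightarrow> payoff p C N (x(n := y)) n \<le> payoff p C N x n)"

definition right_deriv0 :: "(real \<Rightarrow> real) \<Rightarrow> real" where
  "right_deriv0 c = (THE d. (c has_real_derivative d) (at_right 0))"

definition assumption1 :: "(nat \<Rightarrow> real \<Rightarrow> real) \<Rightarrow> nat \<Rightarrow> bool" where
  "assumption1 C N \<longleftrightarrow> (\<forall>n<N.
      convex_on {0..} (C n) \<and> continuous_on {0..} (C n) \<and> mono_on {0..} (C n) \<and>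
      (\<forall>x>0. C n differentiable at x) \<and> continuous_on {0<..} (deriv (C n)) \<and>
      C n 0 = 0)"

definition min_marginal0 :: "(nat \<Rightarrow> real \<Rightarrow> real) \<Rightarrow> nat \<Rightarrow> real" where
  "min_marginal0 C N = (MIN n\<in>{..<N}. right_deriv0 (C n))"

definition assumption3 :: "(real \<Rightarrow> real) \<Rightarrow> (nat \<Rightarrow> real \<Rightarrow> real) \<Rightarrow> nat \<Rightarrow> bool" where
  "assumption3 p C N \<longleftrightarrow> (\<exists>R>0. p R \<le> min_marginal0 C N)"

definition assumption4 :: "(real \<Rightarrow> real) \<Rightarrow> (nat \<Rightarrow> real \<Rightarrow> real) \<Rightarrow> nat \<Rightarrow> bool" where
  "assumption4 p C N \<longleftrightarrow> p 0 > min_marginal0 C N"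

definition welfare :: "(real \<Rightarrow> real) \<Rightarrow> (nat \<Rightarrow> real \<Rightarrow> real) \<Rightarrow> nat \<Rightarrow> (nat \<Rightarrow> real) \<Rightarrow> real" where
  "welfare p C N x = integral {0..total N x} p - (\<Sum>n<N. C n (x n))"

definition social_optimum :: "(real \<Rightarrow> real) \<Rightarrow> (nat \<Rightarrow> real \<Rightarrow> real) \<Rightarrow> nat \<Rightarrow> (nat \<Rightarrow> real) \<Rightarrow> bool" where
  "social_optimum p C N xS \<longleftrightarrow> feasible N xS \<and>
     (\<forall>y. feasible N y \<longrightarrow> welfare p C N y \<le> welfare p C N xS)"

definition efficiency :: "(real \<Rightarrow> real) \<Rightarrow> (nat \<Rightarrow> real \<Rightarrow> real) \<Rightarrow> nat \<Rightarrow> (nat \<Rightarrow> real) \<Rightarrow> (nat \<Rightarrow> real) \<Rightarrow> real" where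
  "efficiency p C N xS x = welfare p C N x / welfare p C N xS"

definition phi_fun :: "real \<Rightarrow> real" where
  "phi_fun c = max ((2 - c + sqrt (c\<^sup>2 - 4 * c + 12)) / 2) 1"

definition f_bound :: "real \<Rightarrow> real" where
  "f_bound c = ((phi_fun c)\<^sup>2 + 2) / ((phi_fun c)\<^sup>2 + 2 * phi_fun c + c)"

end

theory Submission
  imports Defs
begin

(* Efficiency of Cournot equilibria for the inverse demand p(q) = max(\<alpha> - \<beta> q^\<delta>, 0),
   0 < \<delta> \<le> 1, with the constant c = (\<delta>+1)^((1-\<delta>)/\<delta>).

   Let X be the equilibrium total supply, M the largest individual supply, s = -p'(X) and
   g = p(X) - s M.  Each supplier's optimality (first-order condition for producers, no
   profitable entry for the others) together with convexity of its cost shows that every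
   cost function lies above a line of slope g through its equilibrium point; summing over
   suppliers bounds the equilibrium cost from above and the cost of any other profile from
   below.  On the demand side, concavity of t^\<delta> shows that the equilibrium surplus is at
   least s X^2/2 and that no total supply gains more than c s M^2/2 of surplus at marginal
   price g.  Together, W(x)/W(x^S) \<ge> (\<phi>^2 + 2)/(\<phi>^2 + 2\<phi> + c) with \<phi> = X/M \<ge> 1, and f(c)
   is the minimum of this expression.  Assumption 4 excludes X = 0, and if p(X) = 0 the
   equilibrium is already optimal. *)

lemma powr_concave_tangent:
  fixes d u v :: real
  assumes d: "0 < d" "d \<le> 1" and u: "0 < u" and v: "0 < v"
  shows "v powr d \<le> u powr d + d * u powr (d - 1) * (v - u)"
proof -
  have cv: "convex_on {0<..} (\<lambda>t. - (t powr d))"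
  proof (rule convex_on_realI[where f' = "\<lambda>t. - (d * t powr (d - 1))"])
    show "connected ({0<..} :: real set)" by simp
    fix t :: real assume "t \<in> {0<..}"
    then show "((\<lambda>t. - (t powr d)) has_real_derivative - (d * t powr (d - 1))) (at t)"
      by (auto intro!: derivative_eq_intros has_real_derivative_powr)
  next
    fix x y :: real assume "x \<in> {0<..}" "y \<in> {0<..}" "x \<le> y"
    then have "y powr (d - 1) \<le> x powr (d - 1)" using d by (intro powr_mono2') auto
    then show "- (d * x powr (d - 1)) \<le> - (d * y powr (d - 1))"
      using d by (simp add: mult_left_mono)
  qed
  have "- (d * u powr (d - 1)) * (v - u) \<le> - (v powr d) - - (u powr d)"
    using u v
    by (intro convex_on_imp_above_tangent[OF cv])
       (auto simp: interior_open
             intro!: derivative_eq_intros has_real_derivative_powr[THEN DERIV_subset])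
  then show ?thesis by (simp add: algebra_simps)
qed

(* The trapezoid rule underestimates the integral of the concave function t^d on [X, Y]. *)
lemma powr_trapezoid:
  fixes d X Y :: real
  assumes d: "0 < d" "d \<le> 1" and X: "0 < X" and XY: "X \<le> Y"
  shows "(Y - X) * (Y powr d + X powr d) / 2 \<le> (Y powr (d + 1) - X powr (d + 1)) / (d + 1)"
proof -
  define F where "F = (\<lambda>t. (t powr (d + 1) - X powr (d + 1)) / (d + 1)
                           - (t - X) * (t powr d + X powr d) / 2)"
  have "F X \<le> F Y"
  proof (rule DERIV_nonneg_imp_increasing_open[OF XY])
    fix t assume t: "X < t" "t < Y"
    then have t0: "0 < t" using X by simp
    have "(F has_real_derivative
        (d + 1) * t powr d / (d + 1) - ((t powr d + X powr d) + (t - X) * (d * t powr (d - 1))) / 2) (at t)"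
      unfolding F_def using t0
      by (auto intro!: derivative_eq_intros has_real_derivative_powr)
    moreover have "(d + 1) * t powr d / (d + 1) - ((t powr d + X powr d) + (t - X) * (d * t powr (d - 1))) / 2
        = (t powr d + d * t powr (d - 1) * (X - t) - X powr d) / 2"
      using d by (simp add: field_simps)
    ultimately have D: "(F has_real_derivative (t powr d + d * t powr (d - 1) * (X - t) - X powr d) / 2) (at t)"
      by (simp only:)
    have "0 \<le> (t powr d + d * t powr (d - 1) * (X - t) - X powr d) / 2"
      using powr_concave_tangent[OF d t0 X] by simp
    with D show "\<exists>y. (F has_real_derivative y) (at t) \<and> 0 \<le> y" by blast
  next
    show "continuous_on {X..Y} F" unfolding F_def using X d by (intro continuous_intros) auto
  qed
  then show ?thesis unfolding F_def by simp
qed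

lemma powr_le_powr_iff_base:
  fixes d q y :: real
  assumes "0 < d" "0 \<le> q" "0 \<le> y"
  shows "q powr d \<le> y powr d \<longleftrightarrow> q \<le> y"
  using assms powr_mono2[of d q y] powr_less_mono2[of d y q] by (auto simp: not_le[symmetric])

lemma powr_root_compare:
  fixes A b d q :: real
  assumes d: "0 < d" and b: "0 < b" and A: "0 < A" and q: "0 \<le> q"
  shows "b * q powr d \<le> A \<longleftrightarrow> q \<le> (A / b) powr (1 / d)"
    and "b * q powr d < A \<longleftrightarrow> q < (A / b) powr (1 / d)"
proof -
  define r where "r = (A / b) powr (1 / d)"
  have r: "0 \<le> r" unfolding r_def by simp
  have "r powr d = A / b" unfolding r_def using d A b by (simp add: powr_powr)
  then have rA: "b * r powr d = A" using b by simp
  show "b * q powr d \<le> A \<longleftrightarrow> q \<le> r"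
    using powr_le_powr_iff_base[OF d q r] b rA by (metis mult_le_cancel_left_pos)
  show "b * q powr d < A \<longleftrightarrow> q < r"
    using powr_le_powr_iff_base[OF d r q] b rA by (metis mult_le_cancel_left_pos not_le)
qed

(* If Y^d exceeds X^d by the tangent increment d X^(d-1) M with M \<le> X, then Y is at most
   (d+1)^((1-d)/d) M to the right of X; this is where the constant of the bound comes from. *)
lemma powr_crossing_bound:
  fixes d X Y M :: real
  assumes d: "0 < d" "d \<le> 1" and X: "0 < X" and Y: "0 < Y" and M: "0 \<le> M" "M \<le> X"
    and cross: "Y powr d = X powr d + d * X powr (d - 1) * M"
  shows "Y - X \<le> (d + 1) powr ((1 - d) / d) * M"
proof -
  define c where "c = (d + 1) powr ((1 - d) / d)"
  have "d * Y powr (d - 1) * (Y - X) \<le> d * X powr (d - 1) * M"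
    using powr_concave_tangent[OF d Y X] cross by (simp add: algebra_simps)
  then have slope: "Y powr (d - 1) * (Y - X) \<le> X powr (d - 1) * M" using d by simp
  have "X * X powr (d - 1) = X powr d" using X by (simp add: powr_diff)
  then have "X powr (d - 1) * M \<le> X powr d" using M X by (metis mult.commute mult_right_mono powr_ge_zero)
  then have "Y powr d \<le> (1 + d) * X powr d" using cross d by (simp add: algebra_simps mult_left_mono)
  then have "(Y / X) powr d \<le> 1 + d" using X by (simp add: powr_divide divide_le_eq)
  then have "((Y / X) powr d) powr ((1 - d) / d) \<le> (1 + d) powr ((1 - d) / d)"
    using d by (intro powr_mono2) auto
  then have ratio: "(Y / X) powr (1 - d) \<le> c" unfolding c_def using d by (simp add: powr_powr add.commute)
  have "X powr (d - 1) * M = (Y / X) powr (1 - d) * Y powr (d - 1) * M"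
    using X Y by (simp add: powr_divide powr_diff field_simps)
  also have "\<dots> \<le> c * Y powr (d - 1) * M" using ratio M by (intro mult_right_mono) auto
  finally have "Y powr (d - 1) * (Y - X) \<le> Y powr (d - 1) * (c * M)"
    using slope by (simp add: algebra_simps)
  then show ?thesis unfolding c_def using Y by simp
qed

lemma convex_chord_origin:
  fixes c :: "real \<Rightarrow> real"
  assumes cv: "convex_on {0..} c" and c0: "c 0 = 0" and a: "0 < a" and ab: "a \<le> b"
  shows "c a \<le> (a / b) * c b"
proof -
  have b: "0 < b" using a ab by simp
  have "c ((1 - a / b) *\<^sub>R 0 + (a / b) *\<^sub>R b) \<le> (1 - a / b) * c 0 + (a / b) * c b"
    using a b ab by (intro convex_onD[OF cv]) (auto simp: divide_le_eq)
  then show ?thesis using c0 b by simp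
qed

lemma convex_has_right_deriv0:
  fixes c :: "real \<Rightarrow> real"
  assumes cv: "convex_on {0..} c" and mo: "mono_on {0..} c" and c0: "c 0 = 0"
  shows "(c has_real_derivative right_deriv0 c) (at_right 0)"
proof -
  define Q where "Q = (\<lambda>y. (c y - c 0) / (y - 0))"
  have "(Q \<longlongrightarrow> Inf (Q ` ({0<..} \<inter> {0<..}))) (at 0 within ({0<..} \<inter> {0<..}))"
  proof (rule Lim_right_bound[where K = 0])
    fix a b :: real assume "a \<in> {0<..}" "b \<in> {0<..}" "0 < a" "a \<le> b"
    then show "Q a \<le> Q b"
      using convex_chord_origin[OF cv c0, of a b] unfolding Q_def c0
      by (simp add: divide_simps mult.commute)
  next
    fix a :: real assume "a \<in> {0<..}" "0 < a"
    then show "0 \<le> Q a" unfolding Q_def using mono_onD[OF mo, of 0 a] c0 by simp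
  qed
  then obtain d where D: "(c has_real_derivative d) (at_right 0)"
    unfolding has_field_derivative_iff Q_def by auto
  have "right_deriv0 c = d" unfolding right_deriv0_def
  proof (rule the_equality)
    fix e assume "(c has_real_derivative e) (at_right 0)"
    with D show "e = d"
      unfolding has_field_derivative_iff by (intro tendsto_unique) auto
  qed (rule D)
  with D show ?thesis by simp
qed

lemma assumption1_cost_nonneg:
  assumes "assumption1 C N" and "n < N" and "0 \<le> y"
  shows "0 \<le> C n y"
  using assms mono_onD[of "{0..}" "C n" 0 y] unfolding assumption1_def by auto

definition power_demand :: "real \<Rightarrow> real \<Rightarrow> real \<Rightarrow> real \<Rightarrow> real" where
  "power_demand \<alpha> \<beta> \<delta> q = max (\<alpha> - \<beta> * q powr \<delta>) 0"

lemma power_demand_continuous: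
  assumes "0 < \<delta>"
  shows "continuous_on {0..} (power_demand \<alpha> \<beta> \<delta>)"
proof -
  have "continuous_on {0..} (\<lambda>q::real. q powr \<delta>)"
    using assms by (intro continuous_on_powr') (auto intro: continuous_intros)
  then show ?thesis unfolding power_demand_def[abs_def]
    by (intro continuous_on_max continuous_on_diff continuous_on_mult continuous_on_const)
qed

lemma power_demand_integral:
  assumes d: "0 < \<delta>" and b: "0 < \<beta>" and q: "0 \<le> q" and pos: "\<beta> * q powr \<delta> \<le> \<alpha>"
  shows "integral {0..q} (power_demand \<alpha> \<beta> \<delta>) = \<alpha> * q - \<beta> * q powr (\<delta> + 1) / (\<delta> + 1)"
proof -
  define F where "F = (\<lambda>t::real. \<alpha> * t - \<beta> * t powr (\<delta> + 1) / (\<delta> + 1))"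
  have "(power_demand \<alpha> \<beta> \<delta> has_integral (F q - F 0)) {0..q}"
  proof (rule fundamental_theorem_of_calculus_interior_strong[where S = "{}"])
    show "continuous_on {0..q} F" unfolding F_def using d
      by (intro continuous_intros continuous_on_powr') (auto intro: continuous_intros)
    fix t assume t: "t \<in> {0<..<q} - {}"
    then have "\<beta> * t powr \<delta> \<le> \<beta> * q powr \<delta>" using b d by (auto intro: powr_mono2)
    then have "power_demand \<alpha> \<beta> \<delta> t = \<alpha> - \<beta> * t powr \<delta>"
      using pos unfolding power_demand_def by simp
    moreover have "(F has_real_derivative \<alpha> - \<beta> * ((\<delta> + 1) * t powr (\<delta> + 1 - 1)) / (\<delta> + 1)) (at t)"
      unfolding F_def using t by (auto intro!: derivative_eq_intros has_real_derivative_powr)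
    ultimately show "(F has_vector_derivative power_demand \<alpha> \<beta> \<delta> t) (at t)"
      using d by (simp add: has_real_derivative_iff_has_vector_derivative)
  qed (use q in auto)
  then show ?thesis unfolding F_def by (simp add: integral_unique)
qed

lemma power_demand_deriv:
  assumes d: "0 < \<delta>" and b: "0 < \<beta>" and X: "0 < X" and aX: "\<beta> * X powr \<delta> < \<alpha>"
  shows "(power_demand \<alpha> \<beta> \<delta> has_real_derivative - (\<beta> * \<delta> * X powr (\<delta> - 1))) (at X)"
proof (rule has_field_derivative_transform_within_open)
  define q0 where "q0 = (\<alpha> / \<beta>) powr (1 / \<delta>)"
  have "0 \<le> \<beta> * X powr \<delta>" using b by simp
  with aX have a: "0 < \<alpha>" by linarith
  show "((\<lambda>q. \<alpha> - \<beta> * q powr \<delta>) has_real_derivative - (\<beta> * \<delta> * X powr (\<delta> - 1))) (at X)"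
    using X by (auto intro!: derivative_eq_intros has_real_derivative_powr)
  show "open {0<..<q0}" by simp
  show "X \<in> {0<..<q0}" using X aX powr_root_compare(2)[OF d b a, of X] unfolding q0_def by simp
  fix q assume "q \<in> {0<..<q0}"
  then have "\<beta> * q powr \<delta> < \<alpha>" using powr_root_compare(2)[OF d b a, of q] unfolding q0_def by simp
  then show "\<alpha> - \<beta> * q powr \<delta> = power_demand \<alpha> \<beta> \<delta> q" unfolding power_demand_def by simp
qed

lemma power_demand_above_tangent:
  assumes d: "0 < \<delta>" "\<delta> \<le> 1" and b: "0 < \<beta>" and X: "0 < X" and h: "0 \<le> h"
  shows "power_demand \<alpha> \<beta> \<delta> X - \<beta> * \<delta> * X powr (\<delta> - 1) * h \<le> power_demand \<alpha> \<beta> \<delta> (X + h)"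
proof -
  have "\<beta> * (X + h) powr \<delta> \<le> \<beta> * (X powr \<delta> + \<delta> * X powr (\<delta> - 1) * h)"
    using powr_concave_tangent[OF d X, of "X + h"] X h b by simp
  moreover have "0 \<le> \<beta> * \<delta> * X powr (\<delta> - 1) * h" using b d h by simp
  ultimately show ?thesis unfolding power_demand_def by (simp add: algebra_simps)
qed

lemma integral_minus_linear_le:
  fixes p :: "real \<Rightarrow> real" and g Ys Y :: real
  assumes pc: "continuous_on {0..} p" and Ys: "0 \<le> Ys" and Y: "0 \<le> Y"
    and above: "\<And>q. 0 \<le> q \<Longrightarrow> q \<le> Ys \<Longrightarrow> g \<le> p q"
    and below: "\<And>q. Ys \<le> q \<Longrightarrow> p q \<le> g"
  shows "integral {0..Y} p - g * Y \<le> integral {0..Ys} p - g * Ys"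
proof -
  have int: "\<And>a b. 0 \<le> a \<Longrightarrow> p integrable_on {a..b}"
    by (rule integrable_continuous_interval, rule continuous_on_subset[OF pc]) auto
  show ?thesis
  proof (cases "Y \<le> Ys")
    case True
    have "integral {0..Y} p + integral {Y..Ys} p = integral {0..Ys} p"
      using True Y int by (intro Henstock_Kurzweil_Integration.integral_combine) auto
    moreover have "integral {Y..Ys} (\<lambda>_. g) \<le> integral {Y..Ys} p"
      using int[OF Y] above Y by (intro integral_le) auto
    ultimately show ?thesis using True by (simp add: algebra_simps)
  next
    case False
    have "integral {0..Ys} p + integral {Ys..Y} p = integral {0..Y} p"
      using False Ys int by (intro Henstock_Kurzweil_Integration.integral_combine) auto
    moreover have "integral {Ys..Y} p \<le> integral {Ys..Y} (\<lambda>_. g)"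
      using int[OF Ys] below by (intro integral_le) auto
    ultimately show ?thesis using False by (simp add: algebra_simps)
  qed
qed

lemma power_demand_saturated_surplus_max:
  assumes d: "0 < \<delta>" and b: "0 < \<beta>" and X: "0 \<le> X" and aX: "\<alpha> \<le> \<beta> * X powr \<delta>"
    and Y: "0 \<le> Y"
  shows "integral {0..Y} (power_demand \<alpha> \<beta> \<delta>) \<le> integral {0..X} (power_demand \<alpha> \<beta> \<delta>)"
proof -
  have "integral {0..Y} (power_demand \<alpha> \<beta> \<delta>) - 0 * Y \<le> integral {0..X} (power_demand \<alpha> \<beta> \<delta>) - 0 * X"
  proof (rule integral_minus_linear_le[OF power_demand_continuous[OF d] X Y])
    fix q :: real
    show "0 \<le> power_demand \<alpha> \<beta> \<delta> q" unfolding power_demand_def by simp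
    assume "X \<le> q"
    then have "\<beta> * X powr \<delta> \<le> \<beta> * q powr \<delta>" using X b d by (auto intro: powr_mono2)
    then show "power_demand \<alpha> \<beta> \<delta> q \<le> 0" using aX unfolding power_demand_def by simp
  qed
  then show ?thesis by simp
qed

lemma power_demand_surplus_lower:
  assumes d: "0 < \<delta>" "\<delta> \<le> 1" and b: "0 < \<beta>" and X: "0 < X" and aX: "\<beta> * X powr \<delta> \<le> \<alpha>"
  shows "\<beta> * \<delta> * X powr (\<delta> - 1) * X\<^sup>2 / 2
           \<le> integral {0..X} (power_demand \<alpha> \<beta> \<delta>) - (\<alpha> - \<beta> * X powr \<delta>) * X"
proof -
  define K where "K = \<beta> * X powr \<delta> * X"
  have "X powr (\<delta> - 1) * X\<^sup>2 = X powr \<delta> * X" using X by (simp add: powr_diff power2_eq_square)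
  then have lhs: "\<beta> * \<delta> * X powr (\<delta> - 1) * X\<^sup>2 / 2 = K * (\<delta> / 2)"
    unfolding K_def by (simp add: algebra_simps)
  have "X powr (\<delta> + 1) = X powr \<delta> * X" using X by (simp add: powr_add)
  then have rhs: "integral {0..X} (power_demand \<alpha> \<beta> \<delta>) - (\<alpha> - \<beta> * X powr \<delta>) * X = K * (\<delta> / (\<delta> + 1))"
    using power_demand_integral[OF d(1) b _ aX] X d unfolding K_def by (simp add: field_simps)
  have "\<delta> / 2 \<le> \<delta> / (\<delta> + 1)" using d by (intro divide_left_mono) auto
  then show ?thesis unfolding lhs rhs K_def using b X by (intro mult_left_mono) auto
qed

(* The surplus that any total supply Y can gain over X at marginal price g = p(X) - s M
   is at most c s M^2 / 2: the gain is maximal where the price falls to g, and there the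
   trapezoid rule and powr_crossing_bound control it. *)
lemma power_demand_surplus_gap:
  fixes \<alpha> \<beta> \<delta> X M Y s g :: real
  defines "p \<equiv> power_demand \<alpha> \<beta> \<delta>"
  assumes d: "0 < \<delta>" "\<delta> \<le> 1" and b: "0 < \<beta>" and X: "0 < X"
    and M: "0 \<le> M" "M \<le> X" and Y: "0 \<le> Y"
    and s: "s = \<beta> * \<delta> * X powr (\<delta> - 1)" and g: "g = (\<alpha> - \<beta> * X powr \<delta>) - s * M"
    and g0: "0 \<le> g"
  shows "integral {0..Y} p - g * Y
           \<le> integral {0..X} p - g * X + (\<delta> + 1) powr ((1 - \<delta>) / \<delta>) / 2 * s * M\<^sup>2"
proof -
  define A where "A = \<beta> * X powr \<delta> + s * M"
  define Ys where "Ys = (A / \<beta>) powr (1 / \<delta>)"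
  have s0: "0 \<le> s" unfolding s using b d by simp
  have A0: "0 < A" unfolding A_def using b X s0 M by (simp add: add_pos_nonneg)
  have gA: "g = \<alpha> - A" unfolding g A_def by simp
  have Ys0: "0 < Ys" unfolding Ys_def using A0 b by simp
  have YsA: "\<beta> * Ys powr \<delta> = A" unfolding Ys_def using d A0 b by (simp add: powr_powr)
  have XYs: "X \<le> Ys" using powr_root_compare(1)[OF d(1) b A0, of X] X s0 M
    unfolding Ys_def A_def by simp
  have opt: "integral {0..Y} p - g * Y \<le> integral {0..Ys} p - g * Ys"
  proof (rule integral_minus_linear_le[OF _ _ Y])
    show "continuous_on {0..} p" unfolding p_def using power_demand_continuous[OF d(1)] .
    fix q :: real
    show "0 \<le> q \<Longrightarrow> q \<le> Ys \<Longrightarrow> g \<le> p q"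
      using powr_root_compare(1)[OF d(1) b A0, of q] unfolding p_def power_demand_def gA Ys_def by simp
    show "Ys \<le> q \<Longrightarrow> p q \<le> g"
      using powr_root_compare(2)[OF d(1) b A0, of q] Ys0 g0
      unfolding p_def power_demand_def gA Ys_def by auto
  qed (use Ys0 in simp)
  have drop: "\<beta> * (Ys powr \<delta> - X powr \<delta>) = s * M" using YsA unfolding A_def by (simp add: algebra_simps)
  have aX: "\<beta> * X powr \<delta> \<le> \<alpha>" using g0 mult_nonneg_nonneg[OF s0 M(1)] unfolding g by linarith
  have aYs: "\<beta> * Ys powr \<delta> \<le> \<alpha>" using g0 unfolding YsA gA by simp
  have "integral {0..Ys} p - g * Ys - (integral {0..X} p - g * X)
      = A * (Ys - X) - \<beta> * ((Ys powr (\<delta> + 1) - X powr (\<delta> + 1)) / (\<delta> + 1))"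
    using power_demand_integral[OF d(1) b _ aYs] power_demand_integral[OF d(1) b _ aX] X Ys0
    unfolding p_def gA by (simp add: algebra_simps add_divide_distrib diff_divide_distrib)
  also have "\<dots> \<le> A * (Ys - X) - \<beta> * ((Ys - X) * (Ys powr \<delta> + X powr \<delta>) / 2)"
    using mult_left_mono[OF powr_trapezoid[OF d X XYs], of \<beta>] b by simp
  also have "\<dots> = (Ys - X) * (s * M) / 2"
    unfolding YsA[symmetric] drop[symmetric] by (simp add: field_simps)
  also have "\<dots> \<le> ((\<delta> + 1) powr ((1 - \<delta>) / \<delta>) * M) * (s * M) / 2"
  proof -
    have "\<beta> * Ys powr \<delta> = \<beta> * (X powr \<delta> + \<delta> * X powr (\<delta> - 1) * M)"
      using YsA unfolding A_def s by (simp add: algebra_simps)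
    then have "Ys powr \<delta> = X powr \<delta> + \<delta> * X powr (\<delta> - 1) * M" using b by simp
    then have "Ys - X \<le> (\<delta> + 1) powr ((1 - \<delta>) / \<delta>) * M" using powr_crossing_bound[OF d X Ys0 M] by simp
    then show ?thesis using s0 M by (intro divide_right_mono mult_right_mono) auto
  qed
  finally show ?thesis using opt by (simp add: power2_eq_square algebra_simps)
qed

lemma total_fun_upd:
  assumes "n < N"
  shows "total N (x(n := y)) = total N x - x n + y"
proof -
  have n: "n \<in> {..<N}" using assms by simp
  have "total N (x(n := y)) = y + (\<Sum>i\<in>{..<N} - {n}. x i)"
    unfolding total_def by (auto simp: sum.remove[OF _ n] intro!: sum.cong)
  moreover have "total N x = x n + (\<Sum>i\<in>{..<N} - {n}. x i)"
    unfolding total_def by (simp add: sum.remove[OF _ n])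
  ultimately show ?thesis by simp
qed

lemma cournot_deviation:
  assumes "cournot_equilibrium p C N x" and "n < N" and "0 \<le> y"
  shows "y * p (total N x - x n + y) - C n y \<le> x n * p (total N x) - C n (x n)"
  using assms total_fun_upd[OF assms(2), of x y]
  unfolding cournot_equilibrium_def payoff_def by fastforce

(* A supplier with x_n > 0 satisfies the first-order condition c'(x_n) = p(X) - s x_n,
   so by convexity its cost lies above the corresponding tangent line. *)
lemma producer_cost_support:
  fixes p c :: "real \<Rightarrow> real"
  assumes cv: "convex_on {0..} c" and dif: "c differentiable at xn"
    and Dp: "(p has_real_derivative - s) (at X)" and xn: "0 < xn"
    and dev: "\<And>y. 0 \<le> y \<Longrightarrow> y * p (X - xn + y) - c y \<le> xn * p X - c xn"
    and y: "0 \<le> y"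
  shows "c xn + (p X - s * xn) * (y - xn) \<le> c y"
proof -
  have Dc: "(c has_real_derivative deriv c xn) (at xn)"
    using dif DERIV_deriv_iff_real_differentiable by blast
  have "((\<lambda>y. p (X - xn + y)) has_real_derivative - s * 1) (at xn)"
    using Dp by (intro DERIV_chain2[where f = p]) (auto intro!: derivative_eq_intros)
  then have "((\<lambda>y. y * p (X - xn + y) - c y) has_real_derivative
                         (1 * p (X - xn + xn) + (- s * 1) * xn) - deriv c xn) (at xn)"
    by (intro DERIV_diff Dc DERIV_mult[OF DERIV_ident])
  moreover have "\<forall>y. \<bar>xn - y\<bar> < xn \<longrightarrow> y * p (X - xn + y) - c y \<le> xn * p (X - xn + xn) - c xn"
    using dev by auto
  ultimately have "(1 * p (X - xn + xn) + (- s * 1) * xn) - deriv c xn = 0"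
    by (rule DERIV_local_max[OF _ xn])
  then have "deriv c xn = p X - s * xn" by simp
  moreover have "deriv c xn * (y - xn) \<le> c y - c xn"
    using y xn by (intro convex_on_imp_above_tangent[OF cv]) (auto intro: DERIV_subset[OF Dc])
  ultimately show ?thesis by simp
qed

(* A supplier with x_n = 0 has no profitable entry, which bounds its cost from below by
   the price p(X) - s M reached when adding at most M (and by convexity beyond M). *)
lemma nonproducer_cost_support:
  fixes p c :: "real \<Rightarrow> real"
  assumes cv: "convex_on {0..} c" and c0: "c 0 = 0" and M: "0 < M"
    and above: "\<And>h. 0 \<le> h \<Longrightarrow> p X - s * h \<le> p (X + h)" and s: "0 \<le> s"
    and dev: "\<And>y. 0 \<le> y \<Longrightarrow> y * p (X + y) - c y \<le> 0"
    and y: "0 \<le> y"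
  shows "(p X - s * M) * y \<le> c y"
proof (cases "y = 0")
  case True then show ?thesis using c0 by simp
next
  case False
  then have y0: "0 < y" using y by simp
  define h where "h = min y M"
  have h: "0 < h" "h \<le> y" "h \<le> M" unfolding h_def using y0 M by auto
  have "h * (p X - s * M) \<le> h * p (X + h)"
    using above[of h] mult_left_mono[OF h(3) s] h by (intro mult_left_mono) auto
  also have "\<dots> \<le> c h" using dev[of h] h by simp
  also have "\<dots> \<le> (h / y) * c y" using convex_chord_origin[OF cv c0 h(1,2)] .
  finally have "h * ((p X - s * M) * y) \<le> h * c y" using y0 by (simp add: field_simps)
  then show ?thesis using h by simp
qed

lemma supplier_cost_support:
  fixes p c :: "real \<Rightarrow> real"
  assumes cv: "convex_on {0..} c" and dif: "\<forall>z>0. c differentiable at z" and c0: "c 0 = 0"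
    and Dp: "(p has_real_derivative - s) (at X)"
    and above: "\<And>h. 0 \<le> h \<Longrightarrow> p X - s * h \<le> p (X + h)" and s: "0 \<le> s"
    and xn: "0 \<le> xn" "xn \<le> M" and M: "0 < M"
    and dev: "\<And>y. 0 \<le> y \<Longrightarrow> y * p (X - xn + y) - c y \<le> xn * p X - c xn"
    and y: "0 \<le> y"
  shows "c xn + (p X - s * M) * y - (p X * xn - s * xn\<^sup>2) \<le> c y"
proof (cases "xn = 0")
  case True
  then show ?thesis using nonproducer_cost_support[OF cv c0 M above s _ y] dev c0 by simp
next
  case False
  then have xn0: "0 < xn" using xn by simp
  have "(p X - s * M) * y \<le> (p X - s * xn) * y"
    using xn s y by (intro mult_right_mono) (auto intro: mult_left_mono)
  then show ?thesis
    using producer_cost_support[OF cv _ Dp xn0 dev y] dif xn0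
    by (simp add: power2_eq_square algebra_simps)
qed

(* Assumption 4 rules out the empty equilibrium: the supplier with the cheapest first unit
   would profitably enter. *)
lemma equilibrium_total_pos:
  assumes N: "N \<ge> 1" and A1: "assumption1 C N" and A4: "assumption4 p C N"
    and eq: "cournot_equilibrium p C N x"
    and pc: "(p \<longlongrightarrow> p 0) (at_right 0)"
  shows "0 < total N x"
proof -
  have fx: "\<And>n. n < N \<Longrightarrow> 0 \<le> x n"
    using eq unfolding cournot_equilibrium_def feasible_def by blast
  have X0: "0 \<le> total N x" unfolding total_def using fx by (auto intro: sum_nonneg)
  have "min_marginal0 C N \<in> (\<lambda>n. right_deriv0 (C n)) ` {..<N}"
    unfolding min_marginal0_def using N by (intro Min_in) (auto simp: lessThan_empty_iff)
  then obtain n0 where n0: "n0 < N" "right_deriv0 (C n0) = min_marginal0 C N" by auto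
  have c: "convex_on {0..} (C n0)" "mono_on {0..} (C n0)" "C n0 0 = 0"
    using A1 n0(1) unfolding assumption1_def by auto
  have slope: "((\<lambda>h. (C n0 h - C n0 0) / (h - 0)) \<longlongrightarrow> right_deriv0 (C n0)) (at_right 0)"
    using convex_has_right_deriv0[OF c] unfolding has_field_derivative_iff .
  show ?thesis
  proof (rule ccontr)
    assume "\<not> 0 < total N x"
    then have X: "total N x = 0" using X0 by simp
    then have "x n0 = 0" using sum_nonneg_eq_0_iff[of "{..<N}" x] fx n0(1) unfolding total_def by auto
    \<comment> \<open>With nothing supplied, entering with a small quantity must not pay off.\<close>
    then have "\<forall>\<^sub>F h in at_right 0. p h \<le> (C n0 h - C n0 0) / (h - 0)"
      using cournot_deviation[OF eq n0(1)] X c(3)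
      by (auto simp: eventually_at_right_field le_divide_eq mult.commute intro!: exI[of _ 1])
    then have "p 0 \<le> right_deriv0 (C n0)" by (rule tendsto_le[OF _ slope pc, rotated]) simp
    then show False using A4 n0(2) unfolding assumption4_def by simp
  qed
qed

(* The function f is the minimum over \<phi> \<ge> 1 of (\<phi>^2 + 2) / (\<phi>^2 + 2\<phi> + c):
   \<phi>_fun c is the positive root of \<phi>^2 + (c-2)\<phi> - 2 (or 1 when that root is below 1). *)
lemma f_bound_le:
  fixes c \<phi> :: real
  assumes c: "0 < c" and \<phi>: "1 \<le> \<phi>"
  shows "f_bound c \<le> (\<phi>\<^sup>2 + 2) / (\<phi>\<^sup>2 + 2 * \<phi> + c)"
proof -
  define r where "r = (2 - c + sqrt (c\<^sup>2 - 4 * c + 12)) / 2"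
  have disc: "c\<^sup>2 - 4 * c + 12 = (c - 2)\<^sup>2 + 8" by (simp add: power2_eq_square algebra_simps)
  then have disc_nonneg: "0 \<le> c\<^sup>2 - 4 * c + 12" using zero_le_power2[of "c - 2"] by linarith
  then have sqrt2: "(sqrt (c\<^sup>2 - 4 * c + 12))\<^sup>2 = c\<^sup>2 - 4 * c + 12" by simp
  have root: "r\<^sup>2 + (c - 2) * r - 2 = 0" unfolding r_def using sqrt2
    by (simp add: power2_eq_square field_simps)
  have den: "0 < \<phi>\<^sup>2 + 2 * \<phi> + c" using \<phi> c by (simp add: add_pos_nonneg)
  show ?thesis
  proof (cases "1 \<le> r")
    case True
    then have "phi_fun c = r" unfolding phi_fun_def r_def by (simp add: max_def)
    moreover have "(r\<^sup>2 + 2) * (r + 1) = r * (r\<^sup>2 + 2 * r + c)" using root by algebra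
    moreover have "0 < r\<^sup>2 + 2 * r + c" using True c by (simp add: add_pos_pos)
    ultimately have fr: "f_bound c = r / (r + 1)" unfolding f_bound_def using True
      by (simp add: divide_eq_eq field_simps)
    have "(\<phi>\<^sup>2 + 2) * (r + 1) - r * (\<phi>\<^sup>2 + 2 * \<phi> + c) = (\<phi> - r)\<^sup>2 - (r\<^sup>2 + (c - 2) * r - 2)"
      by algebra
    then have "r * (\<phi>\<^sup>2 + 2 * \<phi> + c) \<le> (\<phi>\<^sup>2 + 2) * (r + 1)"
      using root zero_le_power2[of "\<phi> - r"] by linarith
    then show ?thesis unfolding fr using den True
      by (simp add: divide_le_eq le_divide_eq mult.commute)
  next
    case False
    then have "phi_fun c = 1" unfolding phi_fun_def r_def by (simp add: max_def)
    have "sqrt (c\<^sup>2 - 4 * c + 12) < c" using False unfolding r_def by simp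
    then have "(sqrt (c\<^sup>2 - 4 * c + 12))\<^sup>2 < c\<^sup>2"
      using disc_nonneg by (intro power_strict_mono) auto
    then have "c\<^sup>2 - 4 * c + 12 < c\<^sup>2" using sqrt2 by simp
    then have c3: "3 < c" by simp
    have "c * 1 \<le> c * \<phi>" using \<phi> c3 by (intro mult_left_mono) auto
    then have "0 \<le> c * \<phi> + c - 6" using c3 by linarith
    then have "0 \<le> (\<phi> - 1) * (c * \<phi> + c - 6)" using \<phi> by simp
    moreover have "(\<phi>\<^sup>2 + 2) * (3 + c) - 3 * (\<phi>\<^sup>2 + 2 * \<phi> + c) = (\<phi> - 1) * (c * \<phi> + c - 6)"
      by (simp add: power2_eq_square algebra_simps)
    ultimately have "3 * (\<phi>\<^sup>2 + 2 * \<phi> + c) \<le> (\<phi>\<^sup>2 + 2) * (3 + c)" by simp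
    then show ?thesis unfolding f_bound_def \<open>phi_fun c = 1\<close> using den c
      by (simp add: divide_le_eq le_divide_eq mult.commute)
  qed
qed

lemma f_bound_le_one:
  assumes "0 < c"
  shows "f_bound c \<le> 1"
proof -
  have "3 / (3 + c) \<le> 1" using assms by simp
  then show ?thesis using f_bound_le[OF assms order_refl] by simp
qed

lemma welfare_ratio_bound:
  fixes s M X Q c w W :: real
  assumes s: "0 < s" and M: "0 < M" "M \<le> X" and Q: "M\<^sup>2 \<le> Q" and c: "0 < c"
    and w: "s * (X\<^sup>2 / 2 + Q) \<le> w" and W: "W \<le> w + s * (M * X + c * M\<^sup>2 / 2 - Q)"
    and wW: "w \<le> W"
  shows "f_bound c \<le> w / W"
proof -
  define Den where "Den = X\<^sup>2 + 2 * M * X + c * M\<^sup>2"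
  have Den0: "0 < Den" unfolding Den_def using M c by (intro add_pos_pos) auto
  have "0 \<le> Q" using Q zero_le_power2[of M] by linarith
  then have "0 < s * (X\<^sup>2 / 2 + Q)" using s M by (intro mult_pos_pos add_pos_nonneg) auto
  then have W0: "0 < W" using w wW by simp
  have "M * M \<le> M * X" and "0 \<le> c * (M * M)" using M c by auto
  then have coeff: "0 \<le> 2 * M * X + c * M\<^sup>2 - 2 * M\<^sup>2" by (simp add: power2_eq_square)
  have "(X\<^sup>2 + 2 * M\<^sup>2) * W \<le> (X\<^sup>2 + 2 * M\<^sup>2) * w + (X\<^sup>2 + 2 * M\<^sup>2) * (s * (M * X + c * M\<^sup>2 / 2 - Q))"
    using W by (simp add: distrib_left[symmetric] mult_left_mono)
  also have "\<dots> = Den * w - (2 * M * X + c * M\<^sup>2 - 2 * M\<^sup>2) * (w - s * (X\<^sup>2 / 2 + Q)) - s * (Q - M\<^sup>2) * Den"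
    unfolding Den_def by (simp add: algebra_simps power2_eq_square)
  also have "\<dots> \<le> Den * w"
  proof -
    have "0 \<le> (2 * M * X + c * M\<^sup>2 - 2 * M\<^sup>2) * (w - s * (X\<^sup>2 / 2 + Q))"
      using coeff w by simp
    moreover have "0 \<le> s * (Q - M\<^sup>2) * Den" using s Q Den0 by simp
    ultimately show ?thesis by linarith
  qed
  finally have "(X\<^sup>2 + 2 * M\<^sup>2) / Den \<le> w / W"
    using Den0 W0 by (simp add: divide_le_eq le_divide_eq mult.commute)
  moreover have "((X / M)\<^sup>2 + 2) / ((X / M)\<^sup>2 + 2 * (X / M) + c)
      = ((X\<^sup>2 + 2 * M\<^sup>2) / M\<^sup>2) / (Den / M\<^sup>2)"
    unfolding Den_def using M by (simp add: field_simps power2_eq_square)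
  then have "(X\<^sup>2 + 2 * M\<^sup>2) / Den = ((X / M)\<^sup>2 + 2) / ((X / M)\<^sup>2 + 2 * (X / M) + c)"
    using M by simp
  moreover have "1 \<le> X / M" using M by simp
  ultimately show ?thesis using f_bound_le[OF c, of "X / M"] by linarith
qed

lemma efficiency_price_zero:
  fixes \<alpha> \<beta> \<delta> :: real
  defines "p \<equiv> power_demand \<alpha> \<beta> \<delta>"
  assumes d: "0 < \<delta>" and a: "0 < \<alpha>" and b: "0 < \<beta>" and A1: "assumption1 C N"
    and eq: "cournot_equilibrium p C N x" and opt: "social_optimum p C N xS"
    and pX: "p (total N x) = 0"
  shows "efficiency p C N xS x = 1"
proof -
  define X where "X = total N x"
  have fx: "\<And>n. n < N \<Longrightarrow> 0 \<le> x n" using eq unfolding cournot_equilibrium_def feasible_def by blast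
  have fxS: "\<And>n. n < N \<Longrightarrow> 0 \<le> xS n" using opt unfolding social_optimum_def feasible_def by blast
  have X0: "0 \<le> X" unfolding X_def total_def using fx by (auto intro: sum_nonneg)
  have "C n (x n) = 0" if n: "n < N" for n
    using cournot_deviation[OF eq n order_refl] assumption1_cost_nonneg[OF A1 n fx[OF n]] A1 n pX
    unfolding assumption1_def by auto
  then have Wx: "welfare p C N x = integral {0..X} p" unfolding welfare_def X_def by simp
  have aX: "\<alpha> \<le> \<beta> * X powr \<delta>"
    using pX unfolding p_def power_demand_def X_def by (simp add: max_def split: if_splits)
  note surplus_max = power_demand_saturated_surplus_max[OF d b X0 aX, folded p_def]
  have "welfare p C N xS \<le> integral {0..total N xS} p"
    unfolding welfare_def using assumption1_cost_nonneg[OF A1] fxS by (auto intro: sum_nonneg)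
  also have "\<dots> \<le> welfare p C N x"
    unfolding Wx using fxS by (intro surplus_max) (auto simp: total_def intro: sum_nonneg)
  finally have Weq: "welfare p C N xS = welfare p C N x"
    using eq opt unfolding cournot_equilibrium_def social_optimum_def by (simp add: order_antisym)
  \<comment> \<open>The equilibrium welfare is positive: it dominates the surplus up to the choke quantity.\<close>
  define q0 where "q0 = (\<alpha> / \<beta>) powr (1 / \<delta>)"
  have q0: "0 < q0" "\<beta> * q0 powr \<delta> = \<alpha>" unfolding q0_def using a b d by (auto simp: powr_powr)
  have "\<beta> * q0 powr (\<delta> + 1) = \<alpha> * q0" using q0 by (simp add: powr_add mult.assoc[symmetric])
  then have "integral {0..q0} p = \<alpha> * q0 * (\<delta> / (\<delta> + 1))"
    using power_demand_integral[OF d b, of q0 \<alpha>] q0 d unfolding p_def by (simp add: field_simps)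
  also have "0 < \<alpha> * q0 * (\<delta> / (\<delta> + 1))" using a q0 d by simp
  finally have "0 < welfare p C N x" using surplus_max[of q0] q0 unfolding Wx by simp
  then show ?thesis unfolding efficiency_def Weq by simp
qed

lemma power_equilibrium_cost_support:
  fixes \<alpha> \<beta> \<delta> :: real
  defines "p \<equiv> power_demand \<alpha> \<beta> \<delta>"
  assumes d: "0 < \<delta>" "\<delta> \<le> 1" and b: "0 < \<beta>" and A1: "assumption1 C N"
    and eq: "cournot_equilibrium p C N x" and n: "n < N"
    and X: "X = total N x" "0 < X" and aX: "\<beta> * X powr \<delta> < \<alpha>"
    and s: "s = \<beta> * \<delta> * X powr (\<delta> - 1)" and M: "x n \<le> M" "0 < M" and y: "0 \<le> y"
  shows "C n (x n) + (p X - s * M) * y - (p X * x n - s * (x n)\<^sup>2) \<le> C n y"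
proof (rule supplier_cost_support[where p = p and X = X and s = s and M = M])
  show "convex_on {0..} (C n)" "\<forall>z>0. C n differentiable at z" "C n 0 = 0"
    using A1 n unfolding assumption1_def by auto
  show "(p has_real_derivative - s) (at X)"
    unfolding p_def s using power_demand_deriv[OF d(1) b X(2) aX] .
  show "p X - s * h \<le> p (X + h)" if "0 \<le> h" for h
    unfolding p_def s using power_demand_above_tangent[OF d b X(2) that] .
  show "\<And>y. 0 \<le> y \<Longrightarrow> y * p (X - x n + y) - C n y \<le> x n * p X - C n (x n)"
    unfolding X(1) by (rule cournot_deviation[OF eq n])
  show "0 \<le> x n" using eq n unfolding cournot_equilibrium_def feasible_def by blast
  show "0 \<le> s" unfolding s using b d by simp
qed (use M y in auto)

lemma summed_cost_bounds:
  fixes C :: "nat \<Rightarrow> real \<Rightarrow> real" and x xS :: "nat \<Rightarrow> real"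
  assumes support: "\<And>n y. n < N \<Longrightarrow> 0 \<le> y \<Longrightarrow> C n (x n) + g * y - (a * x n - s * (x n)\<^sup>2) \<le> C n y"
    and C0: "\<And>n. n < N \<Longrightarrow> C n 0 = 0" and fxS: "\<And>n. n < N \<Longrightarrow> 0 \<le> xS n"
  shows "(\<Sum>n<N. C n (x n)) \<le> a * total N x - s * (\<Sum>n<N. (x n)\<^sup>2)"
    and "(\<Sum>n<N. C n (x n)) + g * total N xS - (a * total N x - s * (\<Sum>n<N. (x n)\<^sup>2))
           \<le> (\<Sum>n<N. C n (xS n))"
proof -
  have "(\<Sum>n<N. C n (x n)) \<le> (\<Sum>n<N. a * x n - s * (x n)\<^sup>2)"
    using support[of _ 0] C0 by (intro sum_mono) auto
  then show "(\<Sum>n<N. C n (x n)) \<le> a * total N x - s * (\<Sum>n<N. (x n)\<^sup>2)"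
    unfolding total_def by (simp add: sum_subtractf sum_distrib_left)
  have "(\<Sum>n<N. C n (x n) + g * xS n - (a * x n - s * (x n)\<^sup>2)) \<le> (\<Sum>n<N. C n (xS n))"
    using support fxS by (intro sum_mono) auto
  then show "(\<Sum>n<N. C n (x n)) + g * total N xS - (a * total N x - s * (\<Sum>n<N. (x n)\<^sup>2))
               \<le> (\<Sum>n<N. C n (xS n))"
    unfolding total_def by (simp add: sum.distrib sum_subtractf sum_distrib_left)
qed

lemma largest_supply_bounds:
  fixes x :: "nat \<Rightarrow> real" and N :: nat
  defines "M \<equiv> Max (x ` {..<N})"
  assumes N: "N \<ge> 1" and fx: "\<And>n. n < N \<Longrightarrow> 0 \<le> x n" and X: "0 < total N x"
  shows "\<exists>n0<N. x n0 = M" and "\<forall>n<N. x n \<le> M" and "0 < M" and "M \<le> total N x"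
    and "M\<^sup>2 \<le> (\<Sum>n<N. (x n)\<^sup>2)"
proof -
  have "M \<in> x ` {..<N}" unfolding M_def using N by (intro Max_in) (auto simp: lessThan_empty_iff)
  then obtain n0 where n0: "n0 < N" "x n0 = M" by auto
  then show "\<exists>n0<N. x n0 = M" by blast
  show Mge: "\<forall>n<N. x n \<le> M" unfolding M_def by simp
  show "M \<le> total N x" unfolding total_def n0(2)[symmetric] using n0(1) fx by (intro member_le_sum) auto
  show "M\<^sup>2 \<le> (\<Sum>n<N. (x n)\<^sup>2)" unfolding n0(2)[symmetric] using n0(1) by (intro member_le_sum) auto
  show "0 < M"
  proof (rule ccontr)
    assume "\<not> 0 < M"
    then have "\<And>n. n < N \<Longrightarrow> x n = 0" using Mge fx by (meson antisym not_less order_trans)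
    then show False using X unfolding total_def by simp
  qed
qed

lemma efficiency_price_positive:
  fixes \<alpha> \<beta> \<delta> :: real
  defines "p \<equiv> power_demand \<alpha> \<beta> \<delta>" and "c \<equiv> (\<delta> + 1) powr ((1 - \<delta>) / \<delta>)"
  assumes N: "N \<ge> 1" and d: "0 < \<delta>" "\<delta> \<le> 1" and b: "0 < \<beta>" and A1: "assumption1 C N"
    and eq: "cournot_equilibrium p C N x" and opt: "social_optimum p C N xS"
    and X: "0 < total N x" and pX: "0 < p (total N x)"
  shows "f_bound c \<le> efficiency p C N xS x"
proof -
  define X where "X = total N x"
  define a where "a = p X"
  define s where "s = \<beta> * \<delta> * X powr (\<delta> - 1)"
  define M where "M = Max (x ` {..<N})"
  define g where "g = a - s * M"
  define Q where "Q = (\<Sum>n<N. (x n)\<^sup>2)"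
  have X0: "0 < X" and s0: "0 < s" using X b d unfolding X_def s_def by auto
  have aX: "\<beta> * X powr \<delta> < \<alpha>" and a: "a = \<alpha> - \<beta> * X powr \<delta>"
    using pX unfolding a_def X_def p_def power_demand_def by (auto simp: max_def split: if_splits)
  have fx: "\<And>n. n < N \<Longrightarrow> 0 \<le> x n" using eq unfolding cournot_equilibrium_def feasible_def by blast
  have fxS: "\<And>n. n < N \<Longrightarrow> 0 \<le> xS n" using opt unfolding social_optimum_def feasible_def by blast
  obtain n0 where n0: "n0 < N" "x n0 = M" and Mge: "\<forall>n<N. x n \<le> M"
    and M0: "0 < M" and MX: "M \<le> X" and QM: "M\<^sup>2 \<le> Q"
    using largest_supply_bounds[OF N fx X] unfolding M_def X_def Q_def by blast
  have support: "C n (x n) + g * y - (a * x n - s * (x n)\<^sup>2) \<le> C n y"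
    if n: "n < N" and y: "0 \<le> y" for n y
  proof -
    have "C n (x n) + (p X - s * M) * y - (p X * x n - s * (x n)\<^sup>2) \<le> C n y"
      unfolding p_def using Mge n
      by (intro power_equilibrium_cost_support[OF d b A1 eq[unfolded p_def] n X_def X0 aX s_def _ M0 y]) auto
    then show ?thesis unfolding a_def g_def .
  qed
  have C0: "\<And>n. n < N \<Longrightarrow> C n 0 = 0" using A1 unfolding assumption1_def by blast
  note costs = summed_cost_bounds[where C = C and x = x and xS = xS and N = N, OF support C0 fxS, folded X_def Q_def]
  \<comment> \<open>The largest supplier earns a nonnegative margin, so \<open>g \<ge> 0\<close>.\<close>
  have g0: "0 \<le> g"
  proof -
    have "C n0 M \<le> a * M - s * M\<^sup>2" using support[OF n0(1) order_refl] n0(2) C0[OF n0(1)] by simp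
    moreover have "0 \<le> C n0 M" using assumption1_cost_nonneg[OF A1 n0(1)] M0 by simp
    ultimately have "0 \<le> g * M" unfolding g_def by (simp add: power2_eq_square algebra_simps)
    then show ?thesis using M0 by (simp add: zero_le_mult_iff)
  qed
  have XS0: "0 \<le> total N xS" unfolding total_def using fxS by (auto intro: sum_nonneg)
  have "s * (X\<^sup>2 / 2 + Q) \<le> welfare p C N x"
    using power_demand_surplus_lower[OF d b X0 less_imp_le[OF aX]] costs(1)
    unfolding welfare_def X_def[symmetric] p_def a s_def by (simp add: algebra_simps)
  moreover have "welfare p C N xS \<le> welfare p C N x + s * (M * X + c * M\<^sup>2 / 2 - Q)"
    using power_demand_surplus_gap[OF d b X0 less_imp_le[OF M0] MX XS0 s_def g_def[unfolded a] g0]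
      costs
    unfolding welfare_def X_def[symmetric] p_def[symmetric] c_def[symmetric] g_def
    by (simp add: power2_eq_square algebra_simps)
  moreover have "welfare p C N x \<le> welfare p C N xS"
    using eq opt unfolding cournot_equilibrium_def social_optimum_def by blast
  moreover have "0 < c" unfolding c_def using d by simp
  ultimately show ?thesis unfolding efficiency_def
    by (intro welfare_ratio_bound[OF s0 M0 MX QM])
qed

theorem mainTheorem15:
  fixes N :: nat and C :: "nat \<Rightarrow> real \<Rightarrow> real" and \<alpha> \<beta> \<delta> :: real
    and p :: "real \<Rightarrow> real" and x xS :: "nat \<Rightarrow> real"
  assumes "N \<ge> 1"
    and "\<alpha> > 0" and "\<beta> > 0" and "0 < \<delta>" and "\<delta> \<le> 1"
    and "p = (\<lambda>q. max (\<alpha> - \<beta> * q powr \<delta>) 0)"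
    and "assumption1 C N" and "assumption3 p C N" and "assumption4 p C N"
    and "cournot_equilibrium p C N x"
    and "social_optimum p C N xS"
  shows "efficiency p C N xS x \<ge> f_bound ((\<delta> + 1) powr ((1 - \<delta>) / \<delta>))"
proof -
  note N = assms(1) and a = assms(2) and b = assms(3) and d = assms(4,5)
    and A1 = assms(7) and A4 = assms(9) and eq = assms(10) and opt = assms(11)
  have p: "p = power_demand \<alpha> \<beta> \<delta>" unfolding assms(6) power_demand_def by (rule refl)
  have "continuous_on {0..} p" unfolding p using power_demand_continuous[OF d(1)] .
  then have "(p \<longlongrightarrow> p 0) (at_right 0)"
    by (auto simp: continuous_on_def intro: tendsto_within_subset)
  then have X: "0 < total N x" using equilibrium_total_pos[OF N A1 A4 eq] by blast
  show ?thesis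
  proof (cases "p (total N x) = 0")
    case True
    then have "efficiency p C N xS x = 1"
      using efficiency_price_zero[OF d(1) a b A1] eq opt unfolding p by blast
    then show ?thesis using f_bound_le_one[of "(\<delta> + 1) powr ((1 - \<delta>) / \<delta>)"] d by simp
  next
    case False
    then have "0 < p (total N x)" unfolding p power_demand_def by simp
    then show ?thesis using efficiency_price_positive[OF N d b A1] eq opt X unfolding p by blast
  qed
qed

end
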